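(* Let $f:X\to Y$ be a surjective perfect map from a normal ballean $X$ onto a ballean $Y$. Then $Y$ is normal.
   Context: A ballean is a pair $(X,\mathcal E_X)$ where $X$ is a set and $\mathcal E_X$ is a family of subsets of $X\times X$ (entourages) such that: each $E\in\mathcal E_X$ contains the diagonal; for any $E,F\in\mathcal E_X$ there is $D\in\mathcal E_X$ with $E\circ F^{-1}\subset D$; and $\bigcup\mathcal E_X=X\times X$. For $E\in\mathcal E_X$, $x\in X$, $A\subset X$: $E[x]=\{y:(x,y)\in E\}$, $E[A]=\bigcup_{a\in A}E[a]$. $B\subset X$ is bounded if $B\subset E[x]$ for some $E\in\mathcal E_X$, $x\in X$; $\mathcal B_X$ is the family of bounded sets. Sets $A,B$ are asymptotically disjoint if $E[A]\cap E[B]\in\mathcal B_X$ for all $E\in\mathcal E_X$; $U$ is an asymptotic neighborhood of $A$ if $E[A]\setminus U\in\mathcal B_X$ for all $E$; $X$ is normal if any two asymptotically disjoint sets have disjoint asymptotic neighborhoods. A map $f:X\to Y$ is macro-uniform if for every $E_X\in\mathcal E_X$ there is $E_Y\in\mathcal E_Y$ with $f(E_X[x])\subset E_Y[f(x)]$ for all $x\in X$; proper if $f^{-1}(B)$ is bounded for every bounded $B\subset Y$; closed if for any asymptotically disjoint sets $A,B\subset X$ with $A=f^{-1}(f(A))$ the sets $f(A),f(B)$ are asymptotically disjoint in $Y$; and perfect if it is macro-uniform, closed and proper. *)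

theory Defs
  imports Main
begin

definition ballean :: "'a set \<Rightarrow> ('a \<times> 'a) set set \<Rightarrow> bool" where
  "ballean X EE \<longleftrightarrow>
     (\<forall>E\<in>EE. E \<subseteq> X \<times> X) \<and>
     (\<forall>E\<in>EE. Id_on X \<subseteq> E) \<and>
     (\<forall>E\<in>EE. \<forall>F\<in>EE. \<exists>D\<in>EE. E O F\<inverse> \<subseteq> D) \<and>
     \<Union>EE = X \<times> X"

text \<open>E[x] = {y. (x,y) \<in> E} is E `` {x}; E[A] is E `` A.\<close>

definition bounded_in :: "'a set \<Rightarrow> ('a \<times> 'a) set set \<Rightarrow> 'a set \<Rightarrow> bool" where
  "bounded_in X EE B \<longleftrightarrow> B \<subseteq> X \<and> (\<exists>E\<in>EE. \<exists>x\<in>X. B \<subseteq> E `` {x})"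

definition asymp_disjoint :: "'a set \<Rightarrow> ('a \<times> 'a) set set \<Rightarrow> 'a set \<Rightarrow> 'a set \<Rightarrow> bool" where
  "asymp_disjoint X EE A B \<longleftrightarrow> (\<forall>E\<in>EE. bounded_in X EE (E `` A \<inter> E `` B))"

definition asymp_nbhd :: "'a set \<Rightarrow> ('a \<times> 'a) set set \<Rightarrow> 'a set \<Rightarrow> 'a set \<Rightarrow> bool" where
  "asymp_nbhd X EE U A \<longleftrightarrow> (\<forall>E\<in>EE. bounded_in X EE (E `` A - U))"

definition normal_ballean :: "'a set \<Rightarrow> ('a \<times> 'a) set set \<Rightarrow> bool" where
  "normal_ballean X EE \<longleftrightarrow>
     (\<forall>A B. A \<subseteq> X \<longrightarrow> B \<subseteq> X \<longrightarrow> asymp_disjoint X EE A B \<longrightarrow>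
        (\<exists>U V. U \<subseteq> X \<and> V \<subseteq> X \<and> asymp_nbhd X EE U A \<and> asymp_nbhd X EE V B \<and> U \<inter> V = {}))"

definition macro_uniform ::
  "'a set \<Rightarrow> ('a \<times> 'a) set set \<Rightarrow> 'b set \<Rightarrow> ('b \<times> 'b) set set \<Rightarrow> ('a \<Rightarrow> 'b) \<Rightarrow> bool" where
  "macro_uniform X EEX Y EEY f \<longleftrightarrow>
     (\<forall>E\<in>EEX. \<exists>F\<in>EEY. \<forall>x\<in>X. f ` (E `` {x}) \<subseteq> F `` {f x})"

definition proper_map ::
  "'a set \<Rightarrow> ('a \<times> 'a) set set \<Rightarrow> 'b set \<Rightarrow> ('b \<times> 'b) set set \<Rightarrow> ('a \<Rightarrow> 'b) \<Rightarrow> bool" where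
  "proper_map X EEX Y EEY f \<longleftrightarrow>
     (\<forall>B. bounded_in Y EEY B \<longrightarrow> bounded_in X EEX (X \<inter> f -` B))"

definition closed_map ::
  "'a set \<Rightarrow> ('a \<times> 'a) set set \<Rightarrow> 'b set \<Rightarrow> ('b \<times> 'b) set set \<Rightarrow> ('a \<Rightarrow> 'b) \<Rightarrow> bool" where
  "closed_map X EEX Y EEY f \<longleftrightarrow>
     (\<forall>A B. A \<subseteq> X \<longrightarrow> B \<subseteq> X \<longrightarrow> asymp_disjoint X EEX A B \<longrightarrow> A = X \<inter> f -` (f ` A) \<longrightarrow>
        asymp_disjoint Y EEY (f ` A) (f ` B))"

definition perfect_map ::
  "'a set \<Rightarrow> ('a \<times> 'a) set set \<Rightarrow> 'b set \<Rightarrow> ('b \<times> 'b) set set \<Rightarrow> ('a \<Rightarrow> 'b) \<Rightarrow> bool" where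
  "perfect_map X EEX Y EEY f \<longleftrightarrow>
     macro_uniform X EEX Y EEY f \<and> closed_map X EEX Y EEY f \<and> proper_map X EEX Y EEY f"

end

theory Submission
  imports Defs
begin

text \<open>Pull two asymptotically disjoint sets A, B \<subseteq> Y back to X: by macro-uniformity and
properness the preimages A', B' are asymptotically disjoint, so normality of X separates them by
disjoint asymptotic neighbourhoods U, V. Since U is an asymptotic neighbourhood of A', the sets A'
and X - U are asymptotically disjoint; A' is saturated, so closedness makes A = f(A') and f(X - U)
asymptotically disjoint, i.e. Y - f(X - U) is an asymptotic neighbourhood of A. The same for B, V,
and surjectivity makes Y - f(X - U) and Y - f(X - V) disjoint.\<close>

lemma bounded_in_subset:
  "bounded_in X EE B \<Longrightarrow> C \<subseteq> B \<Longrightarrow> bounded_in X EE C"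
  unfolding bounded_in_def by blast

lemma ballean_entourage_in:
  "ballean X EE \<Longrightarrow> E \<in> EE \<Longrightarrow> (a, b) \<in> E \<Longrightarrow> a \<in> X \<and> b \<in> X"
  unfolding ballean_def by auto

lemma ballean_refl:
  "ballean X EE \<Longrightarrow> E \<in> EE \<Longrightarrow> x \<in> X \<Longrightarrow> (x, x) \<in> E"
  unfolding ballean_def Id_on_def by blast

lemma ballean_comp_converse:
  "ballean X EE \<Longrightarrow> E \<in> EE \<Longrightarrow> F \<in> EE \<Longrightarrow> \<exists>D\<in>EE. E O F\<inverse> \<subseteq> D"
  unfolding ballean_def by auto

lemma ballean_converse:
  assumes "ballean X EE" "F \<in> EE"
  shows "\<exists>G\<in>EE. F\<inverse> \<subseteq> G"
proof -
  obtain D where D: "D \<in> EE" "F O F\<inverse> \<subseteq> D"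
    using ballean_comp_converse[OF assms assms(2)] by blast
  have "F\<inverse> \<subseteq> F O F\<inverse>"
    using ballean_entourage_in[OF assms] ballean_refl[OF assms] by blast
  with D show ?thesis by blast
qed

lemma ballean_comp:
  assumes "ballean X EE" "E \<in> EE" "F \<in> EE"
  shows "\<exists>D\<in>EE. E O F \<subseteq> D"
proof -
  obtain G where G: "G \<in> EE" "F\<inverse> \<subseteq> G" using ballean_converse[OF assms(1,3)] by blast
  obtain D where D: "D \<in> EE" "E O G\<inverse> \<subseteq> D"
    using ballean_comp_converse[OF assms(1,2) G(1)] by blast
  from G(2) have "E O F \<subseteq> E O G\<inverse>" by auto
  with D show ?thesis by blast
qed

lemma asymp_nbhd_imp_asymp_disjoint_complement:
  assumes bal: "ballean X EE" and nbhd: "asymp_nbhd X EE U A"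
  shows "asymp_disjoint X EE A (X - U)"
  unfolding asymp_disjoint_def
proof
  fix E assume E: "E \<in> EE"
  obtain D where D: "D \<in> EE" "E O E\<inverse> \<subseteq> D" using ballean_comp_converse[OF bal E E] by blast
  have "bounded_in X EE (D `` A - U)" using nbhd D(1) unfolding asymp_nbhd_def by blast
  then obtain G x0 where G: "G \<in> EE" "x0 \<in> X" "D `` A - U \<subseteq> G `` {x0}"
    unfolding bounded_in_def by blast
  obtain H where H: "H \<in> EE" "G O E \<subseteq> H" using ballean_comp[OF bal G(1) E] by blast
  have "E `` A \<inter> E `` (X - U) \<subseteq> H `` {x0}"
  proof
    fix z assume "z \<in> E `` A \<inter> E `` (X - U)"
    then obtain a w where a: "a \<in> A" "(a, z) \<in> E" and w: "w \<in> X - U" "(w, z) \<in> E" by blast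
    then have "(a, w) \<in> D" using D(2) by blast
    then have "w \<in> D `` A - U" using a(1) w(1) by blast
    then have "(x0, w) \<in> G" using G(3) by blast
    then have "(x0, z) \<in> G O E" using w(2) by blast
    then show "z \<in> H `` {x0}" using H(2) by blast
  qed
  moreover have "E `` A \<inter> E `` (X - U) \<subseteq> X" using ballean_entourage_in[OF bal E] by blast
  ultimately show "bounded_in X EE (E `` A \<inter> E `` (X - U))"
    unfolding bounded_in_def using H(1) G(2) by blast
qed

lemma asymp_disjoint_imp_asymp_nbhd_complement:
  assumes bal: "ballean X EE" and "B \<subseteq> X" and disj: "asymp_disjoint X EE A B"
  shows "asymp_nbhd X EE (X - B) A"
  unfolding asymp_nbhd_def
proof
  fix E assume E: "E \<in> EE"
  have "B \<subseteq> E `` B" using \<open>B \<subseteq> X\<close> ballean_refl[OF bal E] by blast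
  moreover have "E `` A \<subseteq> X" using ballean_entourage_in[OF bal E] by blast
  ultimately have "E `` A - (X - B) \<subseteq> E `` A \<inter> E `` B" by blast
  with disj E show "bounded_in X EE (E `` A - (X - B))"
    unfolding asymp_disjoint_def by (blast intro: bounded_in_subset)
qed

lemma asymp_disjoint_preimage:
  assumes "ballean X EEX" "macro_uniform X EEX Y EEY f" "proper_map X EEX Y EEY f"
    and disj: "asymp_disjoint Y EEY A B"
  shows "asymp_disjoint X EEX (X \<inter> f -` A) (X \<inter> f -` B)"
  unfolding asymp_disjoint_def
proof
  fix E assume E: "E \<in> EEX"
  obtain F where F: "F \<in> EEY" "\<forall>x\<in>X. f ` (E `` {x}) \<subseteq> F `` {f x}"
    using assms(2) E unfolding macro_uniform_def by blast
  have "bounded_in X EEX (X \<inter> f -` (F `` A \<inter> F `` B))"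
    using assms(3) disj F(1) unfolding proper_map_def asymp_disjoint_def by blast
  moreover have "E `` (X \<inter> f -` A) \<inter> E `` (X \<inter> f -` B) \<subseteq> X \<inter> f -` (F `` A \<inter> F `` B)"
  proof
    fix z assume "z \<in> E `` (X \<inter> f -` A) \<inter> E `` (X \<inter> f -` B)"
    then obtain a b where a: "a \<in> X" "f a \<in> A" "(a, z) \<in> E" and b: "b \<in> X" "f b \<in> B" "(b, z) \<in> E"
      by blast
    have "f z \<in> F `` {f a}" "f z \<in> F `` {f b}" using F(2) a b by blast+
    moreover have "z \<in> X" using ballean_entourage_in[OF assms(1) E a(3)] by blast
    ultimately show "z \<in> X \<inter> f -` (F `` A \<inter> F `` B)" using a(2) b(2) by blast
  qed
  ultimately show "bounded_in X EEX (E `` (X \<inter> f -` A) \<inter> E `` (X \<inter> f -` B))"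
    by (rule bounded_in_subset)
qed

lemma closed_map_image_asymp_nbhd:
  assumes "ballean X EEX" "ballean Y EEY" "f ` X \<subseteq> Y" "closed_map X EEX Y EEY f"
    and "A \<subseteq> X" "A = X \<inter> f -` (f ` A)" and "U \<subseteq> X" "asymp_nbhd X EEX U A"
  shows "asymp_nbhd Y EEY (Y - f ` (X - U)) (f ` A)"
proof -
  have "asymp_disjoint X EEX A (X - U)"
    using assms(1,8) by (rule asymp_nbhd_imp_asymp_disjoint_complement)
  moreover have "X - U \<subseteq> X" by blast
  ultimately have "asymp_disjoint Y EEY (f ` A) (f ` (X - U))"
    using assms(4-6) unfolding closed_map_def by simp
  moreover have "f ` (X - U) \<subseteq> Y" using assms(3) by blast
  ultimately show ?thesis
    using assms(2) asymp_disjoint_imp_asymp_nbhd_complement by metis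
qed

theorem proposition2p3:
  fixes X :: "'a set" and EEX :: "('a \<times> 'a) set set"
    and Y :: "'b set" and EEY :: "('b \<times> 'b) set set" and f :: "'a \<Rightarrow> 'b"
  assumes "ballean X EEX" and "ballean Y EEY"
    and "f ` X = Y"
    and "perfect_map X EEX Y EEY f"
    and "normal_ballean X EEX"
  shows "normal_ballean Y EEY"
  unfolding normal_ballean_def
proof (intro allI impI)
  fix A B assume "A \<subseteq> Y" "B \<subseteq> Y" and disj: "asymp_disjoint Y EEY A B"
  define A' where "A' = X \<inter> f -` A"
  define B' where "B' = X \<inter> f -` B"
  have image_preimage: "f ` (X \<inter> f -` C) = C" if "C \<subseteq> Y" for C
    using that assms(3) by auto
  have A': "A' \<subseteq> X" "f ` A' = A" "A' = X \<inter> f -` (f ` A')"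
    using image_preimage[OF \<open>A \<subseteq> Y\<close>] unfolding A'_def by auto
  have B': "B' \<subseteq> X" "f ` B' = B" "B' = X \<inter> f -` (f ` B')"
    using image_preimage[OF \<open>B \<subseteq> Y\<close>] unfolding B'_def by auto
  have "asymp_disjoint X EEX A' B'"
    using asymp_disjoint_preimage[OF assms(1) _ _ disj] assms(4)
    unfolding A'_def B'_def perfect_map_def by blast
  then obtain U V where UV: "U \<subseteq> X" "V \<subseteq> X" "U \<inter> V = {}"
    "asymp_nbhd X EEX U A'" "asymp_nbhd X EEX V B'"
    using assms(5) A'(1) B'(1) unfolding normal_ballean_def by metis
  have closed: "closed_map X EEX Y EEY f" using assms(4) unfolding perfect_map_def by blast
  show "\<exists>U V. U \<subseteq> Y \<and> V \<subseteq> Y \<and> asymp_nbhd Y EEY U A \<and> asymp_nbhd Y EEY V B \<and> U \<inter> V = {}"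
  proof (intro exI conjI)
    show "asymp_nbhd Y EEY (Y - f ` (X - U)) A"
      using closed_map_image_asymp_nbhd[OF assms(1,2) _ closed A'(1,3) UV(1,4)] A'(2) assms(3)
      by simp
    show "asymp_nbhd Y EEY (Y - f ` (X - V)) B"
      using closed_map_image_asymp_nbhd[OF assms(1,2) _ closed B'(1,3) UV(2,5)] B'(2) assms(3)
      by simp
    show "(Y - f ` (X - U)) \<inter> (Y - f ` (X - V)) = {}"
      using assms(3) UV(3) by auto
  qed auto
qed

end
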